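(* Let $S_n=(E_{n-m},K_m)$ be a word-representable split graph with $m\geq 3$, and let $d$ be an integer with $2\leq d\leq \frac{m+1}{2}$. Then $E_{n-m}$ contains at most $m$ vertices of degree $d$ having pairwise distinct neighbourhoods. Moreover, this bound is achievable: for every such $m$ and $d$ there is a word-representable split graph $(E_{n-m},K_m)$ whose independent set contains $m$ vertices of degree $d$ with pairwise distinct neighbourhoods.
   Context: A graph $G=(V,E)$ is word-representable if there exists a word $w$ over the alphabet $V$ such that for all distinct $x,y\in V$, the letters $x$ and $y$ alternate in $w$ if and only if $xy\in E$ (alternation meaning that deleting all letters other than $x$ and $y$ leaves $xyxy\cdots$ or $yxyx\cdots$). The notation $S_n=(E_{n-m},K_m)$ denotes a split graph on $n$ vertices whose vertex set is partitioned into a maximal clique $K_m$ on $m$ vertices and an independent set $E_{n-m}$ on $n-m$ vertices. *)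

theory Defs
  imports Main
begin

definition simple_graph :: "'a set \<Rightarrow> ('a \<Rightarrow> 'a \<Rightarrow> bool) \<Rightarrow> bool" where
  "simple_graph V Adj \<longleftrightarrow> finite V \<and> (\<forall>x y. Adj x y \<longrightarrow> Adj y x)
     \<and> (\<forall>x. \<not> Adj x x) \<and> (\<forall>x y. Adj x y \<longrightarrow> x \<in> V \<and> y \<in> V)"

definition neighbourhood :: "'a set \<Rightarrow> ('a \<Rightarrow> 'a \<Rightarrow> bool) \<Rightarrow> 'a \<Rightarrow> 'a set" where
  "neighbourhood V Adj x = {y \<in> V. Adj x y}"

definition degree :: "'a set \<Rightarrow> ('a \<Rightarrow> 'a \<Rightarrow> bool) \<Rightarrow> 'a \<Rightarrow> nat" where
  "degree V Adj x = card (neighbourhood V Adj x)"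

definition alternate :: "'a list \<Rightarrow> 'a \<Rightarrow> 'a \<Rightarrow> bool" where
  "alternate w x y \<longleftrightarrow>
     (let u = filter (\<lambda>z. z = x \<or> z = y) w in
       (\<forall>i < length u. u ! i = (if even i then x else y)) \<or>
       (\<forall>i < length u. u ! i = (if even i then y else x)))"

definition word_representable :: "'a set \<Rightarrow> ('a \<Rightarrow> 'a \<Rightarrow> bool) \<Rightarrow> bool" where
  "word_representable V Adj \<longleftrightarrow>
     (\<exists>w. set w = V \<and> (\<forall>x\<in>V. \<forall>y\<in>V. x \<noteq> y \<longrightarrow> (alternate w x y \<longleftrightarrow> Adj x y)))"

definition is_clique :: "('a \<Rightarrow> 'a \<Rightarrow> bool) \<Rightarrow> 'a set \<Rightarrow> bool" where
  "is_clique Adj K \<longleftrightarrow> (\<forall>x\<in>K. \<forall>y\<in>K. x \<noteq> y \<longrightarrow> Adj x y)"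

definition maximal_clique :: "'a set \<Rightarrow> ('a \<Rightarrow> 'a \<Rightarrow> bool) \<Rightarrow> 'a set \<Rightarrow> bool" where
  "maximal_clique V Adj K \<longleftrightarrow> K \<subseteq> V \<and> is_clique Adj K \<and>
     (\<forall>v \<in> V - K. \<not> is_clique Adj (insert v K))"

definition independent_set :: "('a \<Rightarrow> 'a \<Rightarrow> bool) \<Rightarrow> 'a set \<Rightarrow> bool" where
  "independent_set Adj I \<longleftrightarrow> (\<forall>x\<in>I. \<forall>y\<in>I. \<not> Adj x y)"

definition split_graph :: "'a set \<Rightarrow> ('a \<Rightarrow> 'a \<Rightarrow> bool) \<Rightarrow> 'a set \<Rightarrow> 'a set \<Rightarrow> bool" where
  "split_graph V Adj I K \<longleftrightarrow> simple_graph V Adj \<and> I \<inter> K = {} \<and> I \<union> K = V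
     \<and> maximal_clique V Adj K \<and> independent_set Adj I"

end

(* Letters that pairwise alternate in a word recur in the cyclic order of their first occurrences:
   if p, q, r are in this cyclic order, then q occurs between any occurrence of p and any later
   occurrence of r. In a word representing a split graph this applies to the clique K together with an
   independent vertex v and its neighbours. Let a(v) be the neighbour of v that follows v cyclically.
   For another neighbour x and a non-neighbour z in K, the letters a(v), x, z lie in this cyclic order:
   otherwise any two occurrences of z would enclose x, a(v) and v, and any two occurrences of v would
   enclose a(v), x and z, so that v and z would alternate. Hence if a(v1) = a(v2) for two vertices of
   equal degree with different neighbourhoods, elements x of N(v1) - N(v2) and y of N(v2) - N(v1)
   would follow a(v1) in both orders, so v |-> a(v) injects S into K.

   For sharpness, the independent vertex m + s is joined to the arc {s, ..., s + d - 1} (mod m) of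
   K = {0, ..., m - 1}. The word runs through 2m rounds of 0, 1, ..., m - 1; the vertex m + s sits in
   front of one end of its arc in early rounds and in front of the other end from its switch round on,
   which makes it alternate exactly with the letters of its arc. The switch rounds are two apart and
   ordered so that for any two independent vertices, the two occurrences of one of them around its
   switch are not separated by the other one; this is where 2d <= m + 1 is needed. *)

theory Submission
  imports Defs "HOL-Library.Product_Lexorder"
begin

section \<open>Separation and alternation\<close>

definition separated_on :: "'i::linorder set \<Rightarrow> ('i \<Rightarrow> 'a) \<Rightarrow> 'a \<Rightarrow> 'a \<Rightarrow> bool" where
  "separated_on E l x y \<longleftrightarrow> (\<forall>i\<in>E. \<forall>j\<in>E. i < j \<longrightarrow> l i = l j \<longrightarrow> l i \<in> {x, y} \<longrightarrow>
     (\<exists>k\<in>E. i < k \<and> k < j \<and> l k \<in> {x, y} \<and> l k \<noteq> l i))"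

abbreviation separated :: "'a list \<Rightarrow> 'a \<Rightarrow> 'a \<Rightarrow> bool" where
  "separated w \<equiv> separated_on {..<length w} ((!) w)"

lemma separated_onD:
  assumes "separated_on E l x y" "i \<in> E" "j \<in> E" "i < j" "l i = l j" "l i \<in> {x, y}"
  shows "\<exists>k\<in>E. i < k \<and> k < j \<and> l k \<in> {x, y} \<and> l k \<noteq> l i"
  using assms unfolding separated_on_def by blast

lemma separated_onI:
  assumes "x \<noteq> y"
    and "\<And>i j. i \<in> E \<Longrightarrow> j \<in> E \<Longrightarrow> i < j \<Longrightarrow> l i = x \<Longrightarrow> l j = x \<Longrightarrow>
      \<exists>k\<in>E. i < k \<and> k < j \<and> l k = y"
    and "\<And>i j. i \<in> E \<Longrightarrow> j \<in> E \<Longrightarrow> i < j \<Longrightarrow> l i = y \<Longrightarrow> l j = y \<Longrightarrow>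
      \<exists>k\<in>E. i < k \<and> k < j \<and> l k = x"
  shows "separated_on E l x y"
  unfolding separated_on_def
proof (intro ballI impI)
  fix i j assume ij: "i \<in> E" "j \<in> E" "i < j" "l i = l j" and "l i \<in> {x, y}"
  then consider "l i = x" "l j = x" | "l i = y" "l j = y"
    by auto
  then show "\<exists>k\<in>E. i < k \<and> k < j \<and> l k \<in> {x, y} \<and> l k \<noteq> l i"
  proof cases
    case 1
    then show ?thesis
      using assms(1) assms(2)[OF ij(1-3) 1] by auto
  next
    case 2
    then show ?thesis
      using assms(1) assms(3)[OF ij(1-3) 2] by auto
  qed
qed

lemma separated_on_commute: "separated_on E l x y \<longleftrightarrow> separated_on E l y x"
  unfolding separated_on_def by (simp add: insert_commute)

lemma not_separated_onI:
  assumes "i \<in> E" "j \<in> E" "i < j" "l i = x" "l j = x" "x \<noteq> y"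
    and "\<And>k. k \<in> E \<Longrightarrow> i < k \<Longrightarrow> k < j \<Longrightarrow> l k \<noteq> y"
  shows "\<not> separated_on E l x y"
  using assms unfolding separated_on_def by fastforce

lemma separated_on_restrict:
  "separated_on E l x y \<longleftrightarrow> separated_on {i \<in> E. l i \<in> {x, y}} l x y"
proof
  assume sep: "separated_on E l x y"
  show "separated_on {i \<in> E. l i \<in> {x, y}} l x y"
    unfolding separated_on_def
  proof (intro ballI impI)
    fix i j assume ij: "i \<in> {i \<in> E. l i \<in> {x, y}}" "j \<in> {i \<in> E. l i \<in> {x, y}}"
      and "i < j" "l i = l j" "l i \<in> {x, y}"
    have "i \<in> E" "j \<in> E"
      using ij by simp_all
    then obtain k where "k \<in> E" "i < k" "k < j" "l k \<in> {x, y}" "l k \<noteq> l i"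
      using separated_onD[OF sep _ _ \<open>i < j\<close> \<open>l i = l j\<close> \<open>l i \<in> {x, y}\<close>] by blast
    then show "\<exists>k\<in>{i \<in> E. l i \<in> {x, y}}. i < k \<and> k < j \<and> l k \<in> {x, y} \<and> l k \<noteq> l i"
      by blast
  qed
next
  assume sep: "separated_on {i \<in> E. l i \<in> {x, y}} l x y"
  show "separated_on E l x y"
    unfolding separated_on_def
  proof (intro ballI impI)
    fix i j assume "i \<in> E" "j \<in> E" "i < j" "l i = l j" "l i \<in> {x, y}"
    then have "i \<in> {i \<in> E. l i \<in> {x, y}}" "j \<in> {i \<in> E. l i \<in> {x, y}}"
      by simp_all
    then show "\<exists>k\<in>E. i < k \<and> k < j \<and> l k \<in> {x, y} \<and> l k \<noteq> l i"
      using separated_onD[OF sep, of i j] \<open>i < j\<close> \<open>l i = l j\<close> \<open>l i \<in> {x, y}\<close> by auto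
  qed
qed

lemma separated_on_image_strict_mono:
  assumes mono: "strict_mono_on A f" and l': "\<And>i. i \<in> A \<Longrightarrow> l' i = l (f i)"
  shows "separated_on (f ` A) l x y \<longleftrightarrow> separated_on A l' x y"
proof
  assume sep: "separated_on (f ` A) l x y"
  show "separated_on A l' x y"
    unfolding separated_on_def
  proof (intro ballI impI)
    fix i j assume ij: "i \<in> A" "j \<in> A" "i < j" "l' i = l' j" "l' i \<in> {x, y}"
    have "f i < f j" "l (f i) = l (f j)" "l (f i) \<in> {x, y}"
      using ij strict_mono_onD[OF mono] l' by simp_all
    from separated_onD[OF sep _ _ this] ij(1,2)
    obtain k where "k \<in> A" "f i < f k" "f k < f j" "l (f k) \<in> {x, y}" "l (f k) \<noteq> l (f i)"
      by blast
    moreover have "i < k" "k < j"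
      using strict_mono_on_less[OF mono] ij(1,2) \<open>k \<in> A\<close> \<open>f i < f k\<close> \<open>f k < f j\<close> by simp_all
    ultimately show "\<exists>k\<in>A. i < k \<and> k < j \<and> l' k \<in> {x, y} \<and> l' k \<noteq> l' i"
      using l' ij(1) by (intro bexI[of _ k]) simp_all
  qed
next
  assume sep: "separated_on A l' x y"
  show "separated_on (f ` A) l x y"
    unfolding separated_on_def
  proof (intro ballI impI)
    fix fi fj assume "fi \<in> f ` A" "fj \<in> f ` A" and f_ij: "fi < fj" "l fi = l fj" "l fi \<in> {x, y}"
    then obtain i j where ij: "i \<in> A" "j \<in> A" "fi = f i" "fj = f j"
      by blast
    have "i < j" "l' i = l' j" "l' i \<in> {x, y}"
      using strict_mono_on_less[OF mono] ij f_ij l' by simp_all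
    from separated_onD[OF sep ij(1,2) this]
    obtain k where "k \<in> A" "i < k" "k < j" "l' k \<in> {x, y}" "l' k \<noteq> l' i"
      by blast
    moreover have "fi < f k" "f k < fj"
      using strict_mono_on_less[OF mono] ij \<open>k \<in> A\<close> \<open>i < k\<close> \<open>k < j\<close> by simp_all
    ultimately show "\<exists>k\<in>f ` A. fi < k \<and> k < fj \<and> l k \<in> {x, y} \<and> l k \<noteq> l fi"
      using l' ij by (intro bexI[of _ "f k"]) simp_all
  qed
qed

lemma separated_map_sorted_list_of_set:
  assumes "finite E"
  shows "separated (map l (sorted_list_of_set E)) x y \<longleftrightarrow> separated_on E l x y"
proof -
  let ?xs = "sorted_list_of_set E"
  have "strict_mono_on {..<length ?xs} ((!) ?xs)"
    using sorted_wrt_iff_nth_less[of "(<)" ?xs] by (auto intro: strict_mono_onI)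
  then have "separated_on ((!) ?xs ` {..<length ?xs}) l x y \<longleftrightarrow>
      separated_on {..<length ?xs} ((!) (map l ?xs)) x y"
    by (rule separated_on_image_strict_mono) simp
  moreover have "(!) ?xs ` {..<length ?xs} = E"
    using assms by (simp add: lessThan_atLeast0 nth_image)
  ultimately show ?thesis
    by simp
qed

lemma filter_eq_map_nth_sorted_positions:
  "filter P w = map ((!) w) (sorted_list_of_set {i. i < length w \<and> P (w ! i)})"
proof -
  let ?js = "filter (\<lambda>i. P (w ! i)) [0..<length w]"
  have "filter P w = filter P (map ((!) w) [0..<length w])"
    by (simp only: map_nth)
  then have "filter P w = map ((!) w) ?js"
    by (simp only: filter_map comp_def)
  moreover have "set ?js = {i. i < length w \<and> P (w ! i)}"
    by auto
  moreover have "sorted_list_of_set (set ?js) = ?js"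
    by (rule sorted_list_of_set.idem_if_sorted_distinct) (simp_all add: sorted_wrt_filter)
  ultimately show ?thesis
    by (simp only:)
qed

lemma separated_filter:
  "separated (filter (\<lambda>z. z \<in> {x, y}) w) x y \<longleftrightarrow> separated w x y"
proof -
  let ?Q = "{i. i < length w \<and> w ! i \<in> {x, y}}"
  have "separated (filter (\<lambda>z. z \<in> {x, y}) w) x y \<longleftrightarrow>
      separated (map ((!) w) (sorted_list_of_set ?Q)) x y"
    by (simp only: filter_eq_map_nth_sorted_positions)
  also have "\<dots> \<longleftrightarrow> separated_on ?Q ((!) w) x y"
    by (rule separated_map_sorted_list_of_set) simp
  also have "\<dots> \<longleftrightarrow> separated w x y"
    by (simp add: separated_on_restrict[of "{..<length w}"] conj_commute)
  finally show ?thesis .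
qed

lemma separated_iff_distinct_adj:
  assumes "set u \<subseteq> {x, y}"
  shows "separated u x y \<longleftrightarrow> distinct_adj u"
proof
  assume sep: "separated u x y"
  have "u ! i \<noteq> u ! Suc i" if "Suc i < length u" for i
  proof
    assume eq: "u ! i = u ! Suc i"
    have "u ! i \<in> {x, y}"
      using assms nth_mem[of i u] that by force
    from separated_onD[OF sep _ _ _ eq this] that
    show False
      by auto
  qed
  then show "distinct_adj u"
    by (simp add: distinct_adj_conv_nth)
next
  assume adj: "distinct_adj u"
  show "separated u x y"
    unfolding separated_on_def
  proof (intro ballI impI)
    fix i j assume ij: "i \<in> {..<length u}" "j \<in> {..<length u}" "i < j" "u ! i = u ! j"
    have "Suc i \<noteq> j"
      using adj ij unfolding distinct_adj_conv_nth by auto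
    then have "Suc i < j"
      using ij(3) by simp
    then have "u ! i \<noteq> u ! Suc i"
      using adj ij(2) unfolding distinct_adj_conv_nth by simp
    moreover have "u ! Suc i \<in> {x, y}"
      using assms nth_mem[of "Suc i" u] \<open>Suc i < j\<close> ij(2) by force
    ultimately show "\<exists>k\<in>{..<length u}. i < k \<and> k < j \<and> u ! k \<in> {x, y} \<and> u ! k \<noteq> u ! i"
      using \<open>Suc i < j\<close> ij(2) by (intro bexI[of _ "Suc i"]) auto
  qed
qed

lemma alternating_if_distinct_adj:
  assumes "set u \<subseteq> {x, y}" "distinct_adj u" "u \<noteq> []" "u ! 0 = x"
  shows "i < length u \<Longrightarrow> u ! i = (if even i then x else y)"
proof (induction i)
  case (Suc i)
  have "u ! i \<noteq> u ! Suc i"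
    using assms(2) Suc.prems by (simp add: distinct_adj_conv_nth)
  moreover have "u ! Suc i \<in> {x, y}"
    using assms(1) nth_mem[OF Suc.prems] by blast
  ultimately show ?case using Suc by (cases "even i") auto
qed (use assms in simp)

lemma alternate_iff_distinct_adj:
  assumes "x \<noteq> y"
  shows "alternate w x y \<longleftrightarrow> distinct_adj (filter (\<lambda>z. z \<in> {x, y}) w)"
proof -
  let ?u = "filter (\<lambda>z. z \<in> {x, y}) w"
  have u: "set ?u \<subseteq> {x, y}" by auto
  have "alternate w x y \<longleftrightarrow> (\<forall>i<length ?u. ?u ! i = (if even i then x else y)) \<or>
      (\<forall>i<length ?u. ?u ! i = (if even i then y else x))"
    unfolding alternate_def Let_def by simp
  also have "\<dots> \<longleftrightarrow> distinct_adj ?u"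
  proof
    assume adj: "distinct_adj ?u"
    show "(\<forall>i<length ?u. ?u ! i = (if even i then x else y)) \<or>
      (\<forall>i<length ?u. ?u ! i = (if even i then y else x))"
    proof (cases "?u = []")
      case False
      then have "?u ! 0 \<in> {x, y}"
        using u nth_mem by blast
      moreover have "set ?u \<subseteq> {y, x}"
        by auto
      ultimately show ?thesis
        using alternating_if_distinct_adj[OF u adj False] 
          alternating_if_distinct_adj[of ?u y x, OF _ adj False] by blast
    qed simp
  next
    assume alt: "(\<forall>i<length ?u. ?u ! i = (if even i then x else y)) \<or>
      (\<forall>i<length ?u. ?u ! i = (if even i then y else x))"
    have "?u ! i \<noteq> ?u ! Suc i" if "Suc i < length ?u" for i
    proof -
      have "i < length ?u"
        using that by simp
      with alt that assms show ?thesis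
        by (cases "even i") auto
    qed
    then show "distinct_adj ?u"
      by (simp add: distinct_adj_conv_nth)
  qed
  finally show ?thesis .
qed

lemma alternate_iff_separated:
  assumes "x \<noteq> y"
  shows "alternate w x y \<longleftrightarrow> separated w x y"
proof -
  have "set (filter (\<lambda>z. z \<in> {x, y}) w) \<subseteq> {x, y}"
    by auto
  then show ?thesis
    using alternate_iff_distinct_adj[OF assms] separated_iff_distinct_adj separated_filter by metis
qed

lemma alternate_commute: "alternate w x y \<longleftrightarrow> alternate w y x"
proof -
  have "filter (\<lambda>z. z = y \<or> z = x) w = filter (\<lambda>z. z = x \<or> z = y) w"
    by (simp only: disj_commute)
  then show ?thesis
    unfolding alternate_def Let_def by (simp only: disj_commute)
qed

definition count_prefix :: "'a list \<Rightarrow> 'a \<Rightarrow> nat \<Rightarrow> nat" where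
  "count_prefix w x n = count_list (take n w) x"

lemma count_prefix_Suc:
  "n < length w \<Longrightarrow> count_prefix w x (Suc n) = count_prefix w x n + (if w ! n = x then 1 else 0)"
  by (simp add: count_prefix_def take_Suc_conv_app_nth)

lemma count_prefix_mono: "n \<le> n' \<Longrightarrow> count_prefix w x n \<le> count_prefix w x n'"
  unfolding count_prefix_def
  by (metis append_take_drop_id count_list_append le_add1 min.absorb1 take_take)

lemma count_prefix_eq_if_absent:
  assumes "\<And>k. a \<le> k \<Longrightarrow> k < b \<Longrightarrow> w ! k \<noteq> x" "a \<le> b" "b \<le> length w"
  shows "count_prefix w x b = count_prefix w x a"
  using assms
proof (induction b)
  case (Suc b)
  then show ?case
    by (cases "a = Suc b") (simp_all add: count_prefix_Suc)
qed simp

definition leads :: "'a list \<Rightarrow> 'a \<Rightarrow> 'a \<Rightarrow> bool" where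
  "leads w x y \<longleftrightarrow> (\<forall>n \<le> length w.
     count_prefix w y n \<le> count_prefix w x n \<and> count_prefix w x n \<le> count_prefix w y n + 1)"

lemma leadsD:
  "leads w x y \<Longrightarrow> n \<le> length w \<Longrightarrow>
    count_prefix w y n \<le> count_prefix w x n \<and> count_prefix w x n \<le> count_prefix w y n + 1"
  unfolding leads_def by blast

lemma leads_snoc:
  "leads (w @ [c]) x y \<longleftrightarrow> leads w x y \<and> count_list (w @ [c]) y \<le> count_list (w @ [c]) x
     \<and> count_list (w @ [c]) x \<le> count_list (w @ [c]) y + 1"
proof -
  have "count_prefix (w @ [c]) z n = count_prefix w z n" if "n \<le> length w" for z n
    using that by (simp add: count_prefix_def)
  moreover have "count_prefix (w @ [c]) z (Suc (length w)) = count_list (w @ [c]) z" for z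
    by (simp add: count_prefix_def)
  ultimately show ?thesis
    unfolding leads_def by (auto simp: le_Suc_eq)
qed

lemma leads_snoc_next:
  assumes "x \<noteq> y" "leads w x y"
    and next_letter: "c = x \<or> c = y \<Longrightarrow> c = (if even (count_list w x + count_list w y) then x else y)"
  shows "leads (w @ [c]) x y"
proof -
  have "count_list w y \<le> count_list w x \<and> count_list w x \<le> count_list w y + 1"
    using leadsD[OF assms(2), of "length w"] by (simp add: count_prefix_def)
  then consider "count_list w x = count_list w y" | "count_list w x = Suc (count_list w y)"
    by linarith
  then show ?thesis
  proof cases
    case 1
    then have "c \<noteq> y"
      using next_letter assms(1) by auto
    then show ?thesis
      using assms(2) 1 by (auto simp: leads_snoc)
  next
    case 2
    then have "c \<noteq> x"
      using next_letter assms(1) by auto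
    then show ?thesis
      using assms(2) 2 by (auto simp: leads_snoc)
  qed
qed

lemma leads_if_filter_alternates:
  assumes "x \<noteq> y"
    and "\<forall>i < length (filter (\<lambda>z. z = x \<or> z = y) w).
           filter (\<lambda>z. z = x \<or> z = y) w ! i = (if even i then x else y)"
  shows "leads w x y"
  using assms(2)
proof (induction w rule: rev_induct)
  case Nil
  then show ?case by (simp add: leads_def count_prefix_def)
next
  case (snoc c w)
  let ?u = "filter (\<lambda>z. z = x \<or> z = y) w"
  let ?u' = "filter (\<lambda>z. z = x \<or> z = y) (w @ [c])"
  have u': "?u' = ?u @ filter (\<lambda>z. z = x \<or> z = y) [c]"
    by simp
  have alt': "?u' ! i = (if even i then x else y)" if "i < length ?u'" for i
    using snoc.prems that by blast
  have "?u ! i = (if even i then x else y)" if "i < length ?u" for i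
  proof -
    have "?u' ! i = ?u ! i" "i < length ?u'"
      using that u' by (simp_all add: nth_append)
    then show ?thesis
      using alt' by simp
  qed
  then have "leads w x y"
    using snoc.IH by blast
  moreover have "length ?u = count_list w x + count_list w y"
    using assms(1) by (induction w) auto
  moreover have "c = (if even (length ?u) then x else y)" if "c = x \<or> c = y"
  proof -
    have "?u' = ?u @ [c]"
      using that by simp
    then show ?thesis
      using alt'[of "length ?u"] by simp
  qed
  ultimately show ?case
    using leads_snoc_next[OF assms(1)] by simp
qed

lemma leads_if_alternate:
  assumes "x \<noteq> y" "alternate w x y"
  shows "leads w x y \<or> leads w y x"
proof -
  let ?u = "filter (\<lambda>z. z = x \<or> z = y) w"
  have swap: "filter (\<lambda>z. z = y \<or> z = x) w = ?u"
    by (simp only: disj_commute)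
  have "(\<forall>i<length ?u. ?u ! i = (if even i then x else y)) \<or>
      (\<forall>i<length ?u. ?u ! i = (if even i then y else x))"
    using assms(2) unfolding alternate_def Let_def .
  then show ?thesis
  proof
    assume "\<forall>i<length ?u. ?u ! i = (if even i then y else x)"
    then have "leads w y x"
      using leads_if_filter_alternates[OF assms(1)[symmetric], of w, unfolded swap] by blast
    then show ?thesis ..
  qed (use leads_if_filter_alternates[OF assms(1)] in blast)
qed

definition first_occ :: "'a list \<Rightarrow> 'a \<Rightarrow> nat" where
  "first_occ w x = (LEAST i. i < length w \<and> w ! i = x)"

lemma first_occ:
  assumes "x \<in> set w"
  shows "first_occ w x < length w" "w ! first_occ w x = x"
proof -
  obtain i where "i < length w" "w ! i = x"
    using assms by (auto simp: in_set_conv_nth)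
  then show "first_occ w x < length w" "w ! first_occ w x = x"
    unfolding first_occ_def by (metis (mono_tags, lifting) LeastI)+
qed

lemma first_occ_le: "i < length w \<Longrightarrow> w ! i = x \<Longrightarrow> first_occ w x \<le> i"
  unfolding first_occ_def by (rule Least_le) simp

lemma inj_on_first_occ: "inj_on (first_occ w) (set w)"
proof
  fix x y assume "x \<in> set w" "y \<in> set w" "first_occ w x = first_occ w y"
  then show "x = y"
    using first_occ(2) by metis
qed

lemma leads_imp_first_occ_less:
  assumes "leads w x y" "x \<noteq> y" "y \<in> set w"
  shows "first_occ w x < first_occ w y"
proof -
  let ?j = "first_occ w y"
  have j: "?j < length w" "w ! ?j = y"
    using first_occ[OF assms(3)] by simp_all
  then have "count_prefix w y (Suc ?j) > 0"
    by (simp add: count_prefix_def take_Suc_conv_app_nth)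
  then have "count_prefix w x (Suc ?j) > 0"
    using leadsD[OF assms(1), of "Suc ?j"] j(1) by simp
  then have "x \<in> set (take (Suc ?j) w)"
    unfolding count_prefix_def by (metis count_list_0_iff less_irrefl)
  then obtain i where i: "i < Suc ?j" "i < length w" "w ! i = x"
    by (auto simp: in_set_conv_nth)
  moreover have "i \<noteq> ?j"
    using j(2) i(3) assms(2) by blast
  ultimately show ?thesis
    using first_occ_le[OF i(2,3)] by simp
qed

lemma leads_iff_first_occ_less:
  assumes "x \<noteq> y" "alternate w x y" "x \<in> set w" "y \<in> set w"
  shows "leads w x y \<longleftrightarrow> first_occ w x < first_occ w y"
proof
  assume less: "first_occ w x < first_occ w y"
  show "leads w x y"
  proof (rule ccontr)
    assume "\<not> leads w x y"
    then have "leads w y x"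
      using leads_if_alternate[OF assms(1,2)] by blast
    then have "first_occ w y < first_occ w x"
      using leads_imp_first_occ_less assms(1,3) by metis
    with less show False
      by simp
  qed
next
  assume "leads w x y"
  then show "first_occ w x < first_occ w y"
    using leads_imp_first_occ_less assms(1,4) by metis
qed

section \<open>Cyclic order of pairwise alternating letters\<close>

definition cyclic :: "'a::linorder \<Rightarrow> 'a \<Rightarrow> 'a \<Rightarrow> bool" where
  "cyclic i j k \<longleftrightarrow> i < j \<and> j < k \<or> j < k \<and> k < i \<or> k < i \<and> i < j"

lemma ex_cyclic_successor:
  fixes f :: "'a \<Rightarrow> nat"
  assumes "A \<noteq> {}" "v \<notin> A" "inj_on f (insert v A)"
  shows "\<exists>a\<in>A. \<forall>x\<in>A - {a}. cyclic (f v) (f a) (f x)"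
proof -
  have ne: "f x \<noteq> f v" "f x \<noteq> f y" if "x \<in> A" "y \<in> A" "x \<noteq> y" for x y
    using inj_onD[OF assms(3), of x v] inj_onD[OF assms(3), of x y] assms(2) that by auto
  show ?thesis
  proof (cases "\<exists>x\<in>A. f v < f x")
    case True
    then obtain a where a: "a \<in> A" "f v < f a" "\<And>x. x \<in> A \<Longrightarrow> f v < f x \<Longrightarrow> f a \<le> f x"
      using ex_has_least_nat[of "\<lambda>x. x \<in> A \<and> f v < f x" _ f] by blast
    have "cyclic (f v) (f a) (f x)" if "x \<in> A - {a}" for x
      using a ne[of x a] that unfolding cyclic_def by (cases "f v < f x") force+
    then show ?thesis
      using a(1) by blast
  next
    case False
    obtain a where a: "a \<in> A" "\<And>x. x \<in> A \<Longrightarrow> f a \<le> f x"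
      using ex_has_least_nat[of "\<lambda>x. x \<in> A" _ f] assms(1) by blast
    have "cyclic (f v) (f a) (f x)" if "x \<in> A - {a}" for x
      using a False ne[of x a] ne[of a x] that unfolding cyclic_def by force
    then show ?thesis
      using a(1) by blast
  qed
qed

definition cyclic_order :: "'a list \<Rightarrow> 'a \<Rightarrow> 'a \<Rightarrow> 'a \<Rightarrow> bool" where
  "cyclic_order w p q r \<longleftrightarrow> cyclic (first_occ w p) (first_occ w q) (first_occ w r)"

lemma cyclic_order_rotate: "cyclic_order w p q r \<Longrightarrow> cyclic_order w q r p"
  unfolding cyclic_order_def cyclic_def by blast

lemma cyclic_order_asym: "cyclic_order w p q r \<Longrightarrow> \<not> cyclic_order w p r q"
  unfolding cyclic_order_def cyclic_def by auto

lemma cyclic_order_total: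
  assumes "distinct [p, q, r]" "{p, q, r} \<subseteq> set w"
  shows "cyclic_order w p q r \<or> cyclic_order w p r q"
proof -
  have "first_occ w p \<noteq> first_occ w q" "first_occ w q \<noteq> first_occ w r" "first_occ w p \<noteq> first_occ w r"
    using assms inj_on_first_occ[of w] by (auto dest: inj_onD)
  then show ?thesis
    unfolding cyclic_order_def cyclic_def by linarith
qed

lemma cyclic_order_between:
  assumes alt: "pairwise (alternate w) {p, q, r}" and dist: "distinct [p, q, r]"
    and occ: "{p, q, r} \<subseteq> set w" and cyc: "cyclic_order w p q r"
    and ij: "i < j" "j < length w" and wi: "w ! i = p" and wj: "w ! j = r"
  shows "\<exists>k. i < k \<and> k < j \<and> w ! k = q"
proof (rule ccontr)
  assume "\<not> ?thesis"
  then have no_q: "\<And>k. Suc i \<le> k \<Longrightarrow> k < j \<Longrightarrow> w ! k \<noteq> q"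
    by auto
  have leads: "leads w a b" if "a \<in> {p, q, r}" "b \<in> {p, q, r}" "a \<noteq> b"
    "first_occ w a < first_occ w b" for a b
    using leads_iff_first_occ_less[of a b w] alt occ that unfolding pairwise_def by blast
  have c0: "count_prefix w q j = count_prefix w q (Suc i)"
    using count_prefix_eq_if_absent[OF no_q] ij by simp
  have c1: "count_prefix w q (Suc i) = count_prefix w q i" "count_prefix w r (Suc i) = count_prefix w r i"
    "count_prefix w p (Suc i) = count_prefix w p i + 1"
    using count_prefix_Suc[of i w] ij wi dist by auto
  have c2: "count_prefix w q (Suc j) = count_prefix w q j" "count_prefix w r (Suc j) = count_prefix w r j + 1"
    "count_prefix w p (Suc j) = count_prefix w p j"
    using count_prefix_Suc[of j w] ij wj dist by auto
  have c3: "count_prefix w p (Suc i) \<le> count_prefix w p j" "count_prefix w r (Suc i) \<le> count_prefix w r j"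
    using count_prefix_mono[of "Suc i" j w] ij by auto
  have n: "i \<le> length w" "Suc i \<le> length w" "j \<le> length w" "Suc j \<le> length w"
    using ij by auto
  note L = leadsD[OF _ n(1)] leadsD[OF _ n(2)] leadsD[OF _ n(3)] leadsD[OF _ n(4)]
  have "leads w p q \<and> leads w q r \<and> leads w p r \<or> leads w q r \<and> leads w r p \<and> leads w q p
      \<or> leads w r p \<and> leads w p q \<and> leads w r q"
    using cyc dist leads[of p q] leads[of q r] leads[of p r] leads[of r p] leads[of q p] leads[of r q]
    unfolding cyclic_order_def cyclic_def by auto
  then show False
  proof (elim disjE conjE)
    assume a: "leads w p q" "leads w q r" "leads w p r"
    show False using L[OF a(1)] L[OF a(2)] L[OF a(3)] c0 c1 c2 c3 by linarith
  next
    assume a: "leads w q r" "leads w r p" "leads w q p"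
    show False using L[OF a(1)] L[OF a(2)] L[OF a(3)] c0 c1 c2 c3 by linarith
  next
    assume a: "leads w r p" "leads w p q" "leads w r q"
    show False using L[OF a(1)] L[OF a(2)] L[OF a(3)] c0 c1 c2 c3 by linarith
  qed
qed

lemma occurs_between_by_cyclic_orders:
  assumes alt: "pairwise (alternate w) {q, r, p}" "pairwise (alternate w) {q, u, r}"
    and dist: "distinct [p, q, r, u]" and occ: "{p, q, r, u} \<subseteq> set w"
    and sep: "separated w p q" and qrp: "cyclic_order w q r p" and qur: "cyclic_order w q u r"
    and ij: "i < length w" "j < length w" "i < j" "w ! i = p" "w ! j = p"
  shows "\<exists>k\<in>{..<length w}. i < k \<and> k < j \<and> w ! k = u"
proof -
  have "w ! i = w ! j" "w ! i \<in> {p, q}"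
    using ij(4,5) by simp_all
  then obtain k1 where "i < k1" "k1 < j" "w ! k1 \<in> {p, q}" "w ! k1 \<noteq> w ! i"
    using separated_onD[OF sep _ _ ij(3)] ij(1,2) by blast
  then have k1: "i < k1" "k1 < j" "w ! k1 = q"
    using ij(4) by auto
  have "distinct [q, r, p]" "distinct [q, u, r]" "{q, r, p} \<subseteq> set w" "{q, u, r} \<subseteq> set w"
    using dist occ by auto
  note between = cyclic_order_between[OF alt(1) this(1,3) qrp] cyclic_order_between[OF alt(2) this(2,4) qur]
  obtain k2 where k2: "k1 < k2" "k2 < j" "w ! k2 = r"
    using between(1)[OF k1(2) ij(2) k1(3) ij(5)] by blast
  obtain k3 where "k1 < k3" "k3 < k2" "w ! k3 = u"
    using between(2)[OF k2(1) _ k1(3) k2(3)] k2(2) ij(2) by auto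
  then show ?thesis
    using k1 k2 ij(2) by (intro bexI[of _ k3]) auto
qed

lemma alternate_if_cyclic_orders:
  assumes alt: "pairwise (alternate w) {a, x, z}" "alternate w v a" "alternate w v x"
    and dist: "distinct [v, a, x, z]" and occ: "{v, a, x, z} \<subseteq> set w"
    and vax: "cyclic_order w v a x" and azx: "cyclic_order w a z x"
  shows "alternate w v z"
proof -
  have "alternate w a v" "alternate w x v"
    using alt(2,3) alternate_commute by metis+
  then have alt_xva: "pairwise (alternate w) {x, v, a}"
    using alt unfolding pairwise_def by blast
  have alt3: "pairwise (alternate w) {x, a, z}" "pairwise (alternate w) {a, z, x}"
    "pairwise (alternate w) {a, x, v}"
    using alt(1) alt_xva by (simp_all add: insert_commute)
  have "alternate w z x"
    using alt(1) dist unfolding pairwise_def by auto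
  moreover have "z \<noteq> x" "v \<noteq> a" "v \<noteq> z"
    using dist by auto
  ultimately have sep_zx: "separated w z x" and sep_va: "separated w v a"
    using alt(2) alternate_iff_separated[of z x w] alternate_iff_separated[of v a w] by simp_all
  have xaz: "cyclic_order w x a z"
    using cyclic_order_rotate[OF cyclic_order_rotate[OF azx]] .
  have xva: "cyclic_order w x v a"
    using cyclic_order_rotate[OF cyclic_order_rotate[OF vax]] .
  have axv: "cyclic_order w a x v"
    using cyclic_order_rotate[OF vax] .
  have dist': "distinct [z, x, a, v]" and occ': "{z, x, a, v} \<subseteq> set w"
    using dist occ by auto
  have "separated w v z"
  proof (rule separated_onI[OF \<open>v \<noteq> z\<close>])
    fix i j assume "i \<in> {..<length w}" "j \<in> {..<length w}" "i < j" "w ! i = v" "w ! j = v"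
    then show "\<exists>k\<in>{..<length w}. i < k \<and> k < j \<and> w ! k = z"
      using occurs_between_by_cyclic_orders[OF alt3(3,2) dist occ sep_va axv azx] by simp
  next
    fix i j assume "i \<in> {..<length w}" "j \<in> {..<length w}" "i < j" "w ! i = z" "w ! j = z"
    then show "\<exists>k\<in>{..<length w}. i < k \<and> k < j \<and> w ! k = v"
      using occurs_between_by_cyclic_orders[OF alt3(1) alt_xva dist' occ' sep_zx xaz xva] by simp
  qed
  then show ?thesis
    using alternate_iff_separated[of v z w] \<open>v \<noteq> z\<close> by simp
qed

section \<open>The upper bound\<close>

locale word_represented_split_graph =
  fixes V :: "'a set" and Adj :: "'a \<Rightarrow> 'a \<Rightarrow> bool" and I K :: "'a set" and w :: "'a list"
  assumes split: "split_graph V Adj I K"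
    and set_word: "set w = V"
    and alternate_iff_Adj: "\<And>x y. x \<in> V \<Longrightarrow> y \<in> V \<Longrightarrow> x \<noteq> y \<Longrightarrow> alternate w x y \<longleftrightarrow> Adj x y"
begin

lemma finite_clique: "finite K"
  and clique_subset: "K \<subseteq> V"
  and independent_subset: "I \<subseteq> V"
  and disjoint: "I \<inter> K = {}"
  using split finite_subset unfolding split_graph_def simple_graph_def by auto

lemma alternating_clique: "pairwise (alternate w) K"
  using split alternate_iff_Adj clique_subset
  unfolding split_graph_def maximal_clique_def is_clique_def pairwise_def by blast

lemma neighbourhood_subset_clique:
  assumes "v \<in> I"
  shows "neighbourhood V Adj v \<subseteq> K"
  using split assms unfolding split_graph_def independent_set_def neighbourhood_def by blast

lemma not_in_neighbourhood: "v \<notin> neighbourhood V Adj v"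
  using split unfolding split_graph_def simple_graph_def neighbourhood_def by blast

lemma alternate_neighbour:
  assumes "a \<in> neighbourhood V Adj v" "v \<in> V"
  shows "alternate w v a"
  using assms alternate_iff_Adj not_in_neighbourhood unfolding neighbourhood_def by auto

lemma ex_cyclic_successor_neighbour:
  assumes "v \<in> I" "neighbourhood V Adj v \<noteq> {}"
  shows "\<exists>a\<in>neighbourhood V Adj v. \<forall>x\<in>neighbourhood V Adj v - {a}. cyclic_order w v a x"
proof -
  have "insert v (neighbourhood V Adj v) \<subseteq> set w"
    using assms(1) neighbourhood_subset_clique[OF assms(1)] clique_subset independent_subset set_word
    by blast
  then have "inj_on (first_occ w) (insert v (neighbourhood V Adj v))"
    using inj_on_first_occ inj_on_subset by blast
  then show ?thesis
    unfolding cyclic_order_def by (rule ex_cyclic_successor[OF assms(2) not_in_neighbourhood])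
qed

lemma cyclic_order_successor_non_neighbour:
  assumes v: "v \<in> I" and a: "a \<in> neighbourhood V Adj v"
    and succ: "\<forall>x\<in>neighbourhood V Adj v - {a}. cyclic_order w v a x"
    and x: "x \<in> neighbourhood V Adj v - {a}" and z: "z \<in> K - neighbourhood V Adj v"
  shows "cyclic_order w a x z"
proof (rule ccontr)
  assume "\<not> cyclic_order w a x z"
  have axz: "{a, x, z} \<subseteq> K"
    using neighbourhood_subset_clique[OF v] a x z by blast
  have vV: "v \<in> V" "v \<notin> K"
    using v independent_subset disjoint by blast+
  have dist: "distinct [v, a, x, z]"
    using a x z vV(2) axz by auto
  have occ: "{v, a, x, z} \<subseteq> set w"
    using axz vV(1) clique_subset set_word by blast
  have "cyclic_order w a z x"
    using cyclic_order_total[of a x z w] \<open>\<not> cyclic_order w a x z\<close> dist occ by auto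
  moreover have "pairwise (alternate w) {a, x, z}"
    using alternating_clique axz pairwise_subset by blast
  moreover have "alternate w v a" "alternate w v x"
    using alternate_neighbour a x vV(1) by auto
  moreover have "cyclic_order w v a x"
    using succ x by blast
  ultimately have "alternate w v z"
    using alternate_if_cyclic_orders[OF _ _ _ dist occ] by blast
  then have "z \<in> neighbourhood V Adj v"
    using alternate_iff_Adj[of v z] vV(1) z clique_subset dist unfolding neighbourhood_def by auto
  then show False
    using z by blast
qed

lemma neighbourhood_eq_if_same_successor:
  assumes v1: "v1 \<in> I" and v2: "v2 \<in> I"
    and card_eq: "card (neighbourhood V Adj v1) = card (neighbourhood V Adj v2)"
    and a1: "a \<in> neighbourhood V Adj v1" "\<forall>x\<in>neighbourhood V Adj v1 - {a}. cyclic_order w v1 a x"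
    and a2: "a \<in> neighbourhood V Adj v2" "\<forall>x\<in>neighbourhood V Adj v2 - {a}. cyclic_order w v2 a x"
  shows "neighbourhood V Adj v1 = neighbourhood V Adj v2"
proof (rule ccontr)
  let ?N = "neighbourhood V Adj"
  assume N_ne: "?N v1 \<noteq> ?N v2"
  have finite_N: "finite (?N v1)" "finite (?N v2)"
    using neighbourhood_subset_clique v1 v2 finite_clique finite_subset by blast+
  have "\<not> ?N v1 \<subseteq> ?N v2"
    using card_subset_eq[OF finite_N(2) _ card_eq] N_ne by blast
  then obtain x where x: "x \<in> ?N v1" "x \<notin> ?N v2"
    by blast
  have "\<not> ?N v2 \<subseteq> ?N v1"
    using card_subset_eq[OF finite_N(1) _ card_eq[symmetric]] N_ne by blast
  then obtain y where y: "y \<in> ?N v2" "y \<notin> ?N v1"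
    by blast
  have "x \<in> ?N v1 - {a}" "y \<in> K - ?N v1"
    using x y a2(1) neighbourhood_subset_clique[OF v2] by auto
  then have xy: "cyclic_order w a x y"
    using cyclic_order_successor_non_neighbour[OF v1 a1] by blast
  have "y \<in> ?N v2 - {a}" "x \<in> K - ?N v2"
    using x y a1(1) neighbourhood_subset_clique[OF v1] by auto
  then have "cyclic_order w a y x"
    using cyclic_order_successor_non_neighbour[OF v2 a2] by blast
  with cyclic_order_asym[OF xy] show False
    by simp
qed

lemma card_le_card_clique:
  assumes S: "S \<subseteq> I" and deg: "\<forall>v\<in>S. degree V Adj v = d" and "0 < d"
    and inj: "inj_on (neighbourhood V Adj) S"
  shows "card S \<le> card K"
proof -
  let ?N = "neighbourhood V Adj"
  define succ where "succ v = (SOME a. a \<in> ?N v \<and> (\<forall>x\<in>?N v - {a}. cyclic_order w v a x))" for v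
  have succ: "succ v \<in> ?N v" "\<forall>x\<in>?N v - {succ v}. cyclic_order w v (succ v) x" if "v \<in> S" for v
  proof -
    have "?N v \<noteq> {}"
      using deg \<open>0 < d\<close> that unfolding degree_def by auto
    then show "succ v \<in> ?N v" "\<forall>x\<in>?N v - {succ v}. cyclic_order w v (succ v) x"
      using someI_ex[OF ex_cyclic_successor_neighbour[unfolded Bex_def]] that S
      unfolding succ_def by blast+
  qed
  have "inj_on succ S"
  proof
    fix v1 v2 assume v: "v1 \<in> S" "v2 \<in> S" "succ v1 = succ v2"
    have I: "v1 \<in> I" "v2 \<in> I"
      using v(1,2) S by blast+
    have card_eq: "card (?N v1) = card (?N v2)"
      using deg v(1,2) unfolding degree_def by simp
    have "succ v1 \<in> ?N v2" "\<forall>x\<in>?N v2 - {succ v1}. cyclic_order w v2 (succ v1) x"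
      using succ[OF v(2)] v(3) by simp_all
    then have "?N v1 = ?N v2"
      by (rule neighbourhood_eq_if_same_successor[OF I card_eq succ[OF v(1)]])
    then show "v1 = v2"
      using inj_onD[OF inj _ v(1,2)] by blast
  qed
  moreover have "succ ` S \<subseteq> K"
    using succ neighbourhood_subset_clique S by blast
  ultimately show ?thesis
    using card_inj_on_le finite_clique by blast
qed

end

theorem card_le_card_clique_if_equal_degree:
  assumes "split_graph V Adj I K" "word_representable V Adj"
    and "S \<subseteq> I" "\<forall>v\<in>S. degree V Adj v = d" "0 < d" "inj_on (neighbourhood V Adj) S"
  shows "card S \<le> card K"
proof -
  obtain w where "set w = V" "\<forall>x\<in>V. \<forall>y\<in>V. x \<noteq> y \<longrightarrow> (alternate w x y \<longleftrightarrow> Adj x y)"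
    using assms(2) unfolding word_representable_def by blast
  then interpret word_represented_split_graph V Adj I K w
    using assms(1) by unfold_locales blast+
  show ?thesis
    using card_le_card_clique assms(3-6) .
qed

section \<open>A split graph attaining the bound\<close>

locale arc_construction =
  fixes m d :: nat
  assumes three_le_m: "3 \<le> m" and two_le_d: "2 \<le> d" and d_le: "2 * d \<le> m + 1"
begin

lemma d_less_m: "d < m"
  using three_le_m d_le by linarith

definition in_arc :: "nat \<Rightarrow> nat \<Rightarrow> bool" where
  "in_arc s z \<longleftrightarrow> (if s + d < m then s \<le> z \<and> z < s + d else z < s + d - m \<or> s \<le> z)"

(* Arcs that do not wrap around switch first, in decreasing order of s, then the others in increasing
   order. *)
definition switch_slot :: "nat \<Rightarrow> nat" where
  "switch_slot s = (if s + d < m then m - d - 1 - s else s)"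

definition switch_round :: "nat \<Rightarrow> nat" where
  "switch_round s = 2 * switch_slot s"

(* The two ends of the arc of s are its first letter and the first letter after it; the vertex m + s
   stands in front of the smaller one (early anchor) up to its switch round and in front of the
   larger one (late anchor) afterwards. *)
definition early_anchor :: "nat \<Rightarrow> nat" where
  "early_anchor s = (if s + d < m then s else s + d - m)"

definition late_anchor :: "nat \<Rightarrow> nat" where
  "late_anchor s = (if s + d < m then s + d else s)"

definition late_start :: "nat \<Rightarrow> nat" where
  "late_start s = (if s + d < m then switch_round s else switch_round s + 1)"

definition visits :: "nat \<Rightarrow> nat \<Rightarrow> nat \<Rightarrow> bool" where
  "visits s i a \<longleftrightarrow> (a = early_anchor s \<and> i \<le> switch_round s) \<or>
     (a = late_anchor s \<and> late_start s \<le> i \<and> i < 2 * m)"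

definition rank :: "nat \<Rightarrow> nat \<Rightarrow> nat \<Rightarrow> nat" where
  "rank s i a =
    (if s + d < m then
      (if i = switch_round s \<and> a = early_anchor s then 2 * m + s
       else if i = switch_round s \<and> a = late_anchor s then s else m + s)
    else
      (if i = switch_round s \<and> a = early_anchor s then s
       else if i = switch_round s + 1 \<and> a = late_anchor s then 2 * m + s else m + s))"

(* A position of the word is a timestamp (i, a, r), ordered lexicographically: round i, clique letter a,
   rank r. The clique letter a itself has rank 3m; a visit of m + s in front of a has rank s, m + s or
   2m + s, which orders the visits in front of a and lets label recover the letter. *)
definition events :: "(nat \<times> nat \<times> nat) set" where
  "events = {(i, z, 3 * m) | i z. i < 2 * m \<and> z < m} \<union>
     {(i, a, rank s i a) | s i a. s < m \<and> visits s i a}"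

fun label :: "nat \<times> nat \<times> nat \<Rightarrow> nat" where
  "label (i, a, r) = (if r = 3 * m then a else m + r mod m)"

lemma early_anchor_less: "s < m \<Longrightarrow> early_anchor s < m"
  unfolding early_anchor_def using d_less_m by auto

lemma late_anchor_less: "s < m \<Longrightarrow> late_anchor s < m"
  unfolding late_anchor_def by auto

lemma switch_round_less: "s < m \<Longrightarrow> switch_round s + 1 < 2 * m"
  unfolding switch_round_def switch_slot_def by auto

lemma visits_less: "visits s i a \<Longrightarrow> s < m \<Longrightarrow> a < m \<and> i < 2 * m"
  unfolding visits_def using early_anchor_less late_anchor_less switch_round_less by fastforce

lemma visits_short_iff:
  "s + d < m \<Longrightarrow> visits s i a \<longleftrightarrow>
    a = s \<and> i \<le> switch_round s \<or> a = s + d \<and> switch_round s \<le> i \<and> i < 2 * m"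
  unfolding visits_def early_anchor_def late_anchor_def late_start_def by auto

lemma visits_wrapping_iff:
  "\<not> s + d < m \<Longrightarrow> visits s i a \<longleftrightarrow>
    a = s + d - m \<and> i \<le> switch_round s \<or> a = s \<and> switch_round s < i \<and> i < 2 * m"
  unfolding visits_def early_anchor_def late_anchor_def late_start_def by auto

lemma rank_short_switch:
  assumes "s < m" "s + d < m"
  shows "rank s (switch_round s) s = 2 * m + s" "rank s (switch_round s) (s + d) = s"
  using assms two_le_d unfolding rank_def early_anchor_def late_anchor_def by auto

lemma rank_wrapping_switch:
  assumes "s < m" "\<not> s + d < m"
  shows "rank s (switch_round s) (s + d - m) = s" "rank s (Suc (switch_round s)) s = 2 * m + s"
  using assms d_less_m unfolding rank_def early_anchor_def late_anchor_def by auto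

lemma rank_cases: "rank s i a = s \<or> rank s i a = m + s \<or> rank s i a = 2 * m + s"
  unfolding rank_def by auto

lemma label_clique: "label (i, z, 3 * m) = z"
  by simp

lemma label_visit: "s < m \<Longrightarrow> label (i, a, rank s i a) = m + s"
  using rank_cases[of s i a] by auto

lemma clique_event: "i < 2 * m \<Longrightarrow> z < m \<Longrightarrow> (i, z, 3 * m) \<in> events"
  unfolding events_def by blast

lemma visit_event: "s < m \<Longrightarrow> visits s i a \<Longrightarrow> (i, a, rank s i a) \<in> events"
  unfolding events_def by blast

lemma clique_events:
  assumes "z < m"
  shows "t \<in> events \<and> label t = z \<longleftrightarrow> (\<exists>i<2 * m. t = (i, z, 3 * m))"
proof
  assume t: "t \<in> events \<and> label t = z"
  show "\<exists>i<2 * m. t = (i, z, 3 * m)"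
  proof (cases "t \<in> {(i, z, 3 * m) | i z. i < 2 * m \<and> z < m}")
    case True
    then show ?thesis using t by auto
  next
    case False
    then obtain s i a where "t = (i, a, rank s i a)" "s < m"
      using t unfolding events_def by blast
    then show ?thesis using t assms label_visit by auto
  qed
qed (use assms in \<open>auto simp: events_def\<close>)

lemma visit_events:
  assumes "s < m"
  shows "t \<in> events \<and> label t = m + s \<longleftrightarrow> (\<exists>i a. visits s i a \<and> t = (i, a, rank s i a))"
proof
  assume t: "t \<in> events \<and> label t = m + s"
  show "\<exists>i a. visits s i a \<and> t = (i, a, rank s i a)"
  proof (cases "t \<in> {(i, z, 3 * m) | i z. i < 2 * m \<and> z < m}")
    case True
    then show ?thesis using t by auto
  next
    case False
    then obtain s' i a where "t = (i, a, rank s' i a)" "s' < m" "visits s' i a"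
      using t unfolding events_def by blast
    moreover have "s' = s"
      using t calculation label_visit by auto
    ultimately show ?thesis by blast
  qed
qed (use assms label_visit in \<open>auto simp: events_def\<close>)

lemma events_cases:
  assumes "t \<in> events"
  obtains (clique) i z where "t = (i, z, 3 * m)" "i < 2 * m" "z < m"
    | (visit) s i a where "t = (i, a, rank s i a)" "s < m" "visits s i a"
  using assms unfolding events_def by blast

lemma label_less:
  assumes "t \<in> events"
  shows "label t < 2 * m"
  using assms
proof (cases rule: events_cases)
  case (visit s i a)
  then show ?thesis
    using label_visit[of s i a] by simp
qed simp

lemma finite_events: "finite events"
proof -
  have "t \<in> {..<2 * m} \<times> {..<m} \<times> {..3 * m}" if "t \<in> events" for t
    using that
  proof (induction rule: events_cases)
    case (visit s i a)
    then show ?case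
      using visits_less[OF visit(3,2)] rank_cases[of s i a] by auto
  qed simp
  then show ?thesis
    using finite_subset[of events] by blast
qed

lemma rank_less: "s < m \<Longrightarrow> rank s i a < 3 * m"
  using rank_cases[of s i a] by auto

lemma clique_letter_between:
  assumes "z < m" "z' < m" "z \<noteq> z'" and t: "t1 \<in> events" "t2 \<in> events" "t1 < t2"
    and "label t1 = z" "label t2 = z"
  shows "\<exists>t\<in>events. t1 < t \<and> t < t2 \<and> label t = z'"
proof -
  obtain i1 i2 where i: "t1 = (i1, z, 3 * m)" "t2 = (i2, z, 3 * m)" "i2 < 2 * m"
    using clique_events[OF assms(1)] assms by metis
  then have "i1 < i2"
    using t(3) by auto
  define j where "j = (if z < z' then i1 else Suc i1)"
  have "j < 2 * m"
    using \<open>i1 < i2\<close> i(3) unfolding j_def by auto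
  then have "(j, z', 3 * m) \<in> events" "label (j, z', 3 * m) = z'"
    using assms(2) unfolding events_def by auto
  moreover have "t1 < (j, z', 3 * m)" "(j, z', 3 * m) < t2"
    using i \<open>i1 < i2\<close> assms(3) unfolding j_def by auto
  ultimately show ?thesis
    by blast
qed

lemma separated_clique:
  "z < m \<Longrightarrow> z' < m \<Longrightarrow> z \<noteq> z' \<Longrightarrow> separated_on events label z z'"
  by (rule separated_onI) (use clique_letter_between in metis)+

lemma visit_between_rounds:
  assumes s: "s < m" and arc: "in_arc s z" and i: "Suc i < 2 * m"
  shows "\<exists>j a. visits s j a \<and> (j = i \<and> z < a \<or> j = Suc i \<and> a \<le> z)"
proof (cases "s + d < m")
  case True
  then have "s \<le> z" "z < s + d"
    using arc unfolding in_arc_def by auto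
  show ?thesis
  proof (cases "Suc i \<le> switch_round s")
    case True
    then have "visits s (Suc i) s"
      using \<open>s + d < m\<close> unfolding visits_short_iff[OF \<open>s + d < m\<close>] by auto
    with \<open>s \<le> z\<close> show ?thesis
      by blast
  next
    case False
    then have "visits s i (s + d)"
      using i unfolding visits_short_iff[OF \<open>s + d < m\<close>] by auto
    with \<open>z < s + d\<close> show ?thesis
      by blast
  qed
next
  case False
  have "s + d - m < s"
    using False d_less_m by linarith
  consider "s \<le> z" | "z < s + d - m"
    using arc False unfolding in_arc_def by auto
  then show ?thesis
  proof cases
    case 1
    let ?a = "if Suc i \<le> switch_round s then s + d - m else s"
    have "visits s (Suc i) ?a" "?a \<le> z"
      using i 1 \<open>s + d - m < s\<close> unfolding visits_wrapping_iff[OF False] by auto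
    then show ?thesis
      by blast
  next
    case 2
    let ?a = "if i \<le> switch_round s then s + d - m else s"
    have "visits s i ?a" "z < ?a"
      using i 2 \<open>s + d - m < s\<close> unfolding visits_wrapping_iff[OF False] by auto
    then show ?thesis
      by blast
  qed
qed

lemma round_between_visits:
  assumes s: "s < m" and arc: "in_arc s z" and v: "visits s i1 a1" "visits s i2 a2"
    and less: "i1 < i2 \<or> i1 = i2 \<and> a1 < a2"
  shows "\<exists>j<2 * m. (i1 < j \<or> j = i1 \<and> a1 \<le> z) \<and> (j < i2 \<or> j = i2 \<and> z < a2)"
proof -
  have i2: "i2 < 2 * m"
    using visits_less[OF v(2) s] by simp
  have "\<not> s + d < m \<Longrightarrow> s + d - m < s"
    using d_less_m s by linarith
  then have next_round: "(a1 \<le> z \<longrightarrow> i1 < i2 \<or> i1 = i2 \<and> z < a2) \<and>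
      (\<not> a1 \<le> z \<longrightarrow> Suc i1 < i2 \<or> Suc i1 = i2 \<and> z < a2)"
    using less v arc
    unfolding visits_def early_anchor_def late_anchor_def late_start_def in_arc_def
    by (auto split: if_splits)
  show ?thesis
  proof (cases "a1 \<le> z")
    case True
    then show ?thesis
      using next_round i2 by (intro exI[of _ i1]) auto
  next
    case False
    then show ?thesis
      using next_round i2 by (intro exI[of _ "Suc i1"]) auto
  qed
qed

lemma separated_in_arc:
  assumes s: "s < m" and z: "z < m" and arc: "in_arc s z"
  shows "separated_on events label z (m + s)"
proof (rule separated_onI)
  show "z \<noteq> m + s"
    using z by simp
next
  fix t1 t2 assume t: "t1 \<in> events" "t2 \<in> events" "t1 < t2" "label t1 = z" "label t2 = z"
  obtain i1 i2 where i: "t1 = (i1, z, 3 * m)" "t2 = (i2, z, 3 * m)" "i2 < 2 * m"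
    using clique_events[OF z] t by metis
  then have "Suc i1 < 2 * m" "i1 < i2"
    using t(3) by auto
  then obtain j a where ja: "visits s j a" "j = i1 \<and> z < a \<or> j = Suc i1 \<and> a \<le> z"
    using visit_between_rounds[OF s arc] by blast
  have "(j, a, rank s j a) \<in> events" "label (j, a, rank s j a) = m + s"
    using visit_events[OF s] ja(1) by blast+
  moreover have "t1 < (j, a, rank s j a)" "(j, a, rank s j a) < t2"
    using i ja(2) \<open>i1 < i2\<close> rank_less[OF s, of j a] by auto
  ultimately show "\<exists>t\<in>events. t1 < t \<and> t < t2 \<and> label t = m + s"
    by blast
next
  fix t1 t2 assume t: "t1 \<in> events" "t2 \<in> events" "t1 < t2" "label t1 = m + s" "label t2 = m + s"
  obtain i1 a1 i2 a2 where v: "visits s i1 a1" "t1 = (i1, a1, rank s i1 a1)"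
    "visits s i2 a2" "t2 = (i2, a2, rank s i2 a2)"
    using visit_events[OF s] t by metis
  then have "i1 < i2 \<or> i1 = i2 \<and> a1 < a2"
    using t(3) by (cases "i1 = i2 \<and> a1 = a2") auto
  then obtain j where j: "j < 2 * m" "i1 < j \<or> j = i1 \<and> a1 \<le> z" "j < i2 \<or> j = i2 \<and> z < a2"
    using round_between_visits[OF s arc v(1,3)] by blast
  have "(j, z, 3 * m) \<in> events" "label (j, z, 3 * m) = z"
    using clique_events[OF z] j(1) by blast+
  moreover have "t1 < (j, z, 3 * m)" "(j, z, 3 * m) < t2"
    using v(2,4) j(2,3) rank_less[OF s, of i1 a1] by auto
  ultimately show "\<exists>t\<in>events. t1 < t \<and> t < t2 \<and> label t = z"
    by blast
qed

lemma not_separated_off_short_arc: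
  assumes s: "s < m" and z: "z < m" and not_arc: "\<not> in_arc s z" and short: "s + d < m"
  shows "\<not> separated_on events label z (m + s)"
proof -
  let ?t1 = "(switch_round s, s, rank s (switch_round s) s)"
  let ?t2 = "(switch_round s, s + d, rank s (switch_round s) (s + d))"
  have "visits s (switch_round s) s" "visits s (switch_round s) (s + d)"
    using switch_round_less[OF s] unfolding visits_short_iff[OF short] by auto
  then have "?t1 \<in> events" "label ?t1 = m + s" "?t2 \<in> events" "label ?t2 = m + s"
    using visit_event[OF s] label_visit[OF s] by blast+
  moreover have "?t1 < ?t2"
    using two_le_d by simp
  moreover have "label t \<noteq> z" if "t \<in> events" "?t1 < t" "t < ?t2" for t
  proof
    assume "label t = z"
    with that(1) obtain j where t: "t = (j, z, 3 * m)"
      using clique_events[OF z] by blast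
    have "(switch_round s, s, 2 * m + s) < (j, z, 3 * m)" "(j, z, 3 * m) < (switch_round s, s + d, s)"
      using that(2,3) unfolding t rank_short_switch[OF s short] by simp_all
    then have "j = switch_round s" "s \<le> z" "z < s + d"
      using s by auto
    then show False
      using not_arc short unfolding in_arc_def by simp
  qed
  moreover have "m + s \<noteq> z"
    using z by simp
  ultimately have "\<not> separated_on events label (m + s) z"
    by (intro not_separated_onI[of ?t1 events ?t2]) simp_all
  then show ?thesis
    by (subst separated_on_commute)
qed

lemma not_separated_off_wrapping_arc:
  assumes s: "s < m" and z: "z < m" and not_arc: "\<not> in_arc s z" and wrapping: "\<not> s + d < m"
  shows "\<not> separated_on events label z (m + s)"
proof -
  let ?t1 = "(switch_round s, z, 3 * m)"
  let ?t2 = "(Suc (switch_round s), z, 3 * m)"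
  have "?t1 \<in> events" "label ?t1 = z" "?t2 \<in> events" "label ?t2 = z"
    using switch_round_less[OF s] z clique_event by simp_all
  moreover have "?t1 < ?t2"
    by simp
  moreover have "label t \<noteq> m + s" if "t \<in> events" "?t1 < t" "t < ?t2" for t
  proof
    assume "label t = m + s"
    with that(1) obtain j a where v: "visits s j a" and t: "t = (j, a, rank s j a)"
      using visit_events[OF s] by blast
    have "(switch_round s, z, 3 * m) < (j, a, rank s j a)" "(j, a, rank s j a) < (Suc (switch_round s), z, 3 * m)"
      using that(2,3) unfolding t by simp_all
    then have "j = switch_round s \<and> z < a \<or> j = Suc (switch_round s) \<and> a \<le> z"
      using rank_less[OF s, of j a] by auto
    with v show False
      using not_arc wrapping unfolding in_arc_def visits_wrapping_iff[OF wrapping] by auto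
  qed
  moreover have "z \<noteq> m + s"
    using z by simp
  ultimately show ?thesis
    by (intro not_separated_onI[of ?t1 events ?t2]) simp_all
qed

lemma not_separated_off_arc:
  "s < m \<Longrightarrow> z < m \<Longrightarrow> \<not> in_arc s z \<Longrightarrow> \<not> separated_on events label z (m + s)"
  using not_separated_off_short_arc not_separated_off_wrapping_arc by blast

(* A vertex resting in front of p during the switch of s does not occur between the two visits of s
   around that switch. *)
definition switch_misses :: "nat \<Rightarrow> nat \<Rightarrow> bool" where
  "switch_misses s p \<longleftrightarrow>
    (if s + d < m then p \<le> early_anchor s \<or> late_anchor s \<le> p
     else early_anchor s \<le> p \<and> p \<le> late_anchor s)"

(* The only place where 2d <= m + 1 is used. *)
lemma switch_misses_either:
  assumes "s < m" "t < m" "switch_slot s < switch_slot t"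
  shows "switch_misses s (early_anchor t) \<or> switch_misses t (late_anchor s)"
  using assms d_le two_le_d three_le_m
  unfolding switch_misses_def switch_slot_def early_anchor_def late_anchor_def
  by (auto split: if_splits)

lemma switch_slot_inj: "s < m \<Longrightarrow> t < m \<Longrightarrow> switch_slot s = switch_slot t \<Longrightarrow> s = t"
  unfolding switch_slot_def by (auto split: if_splits)

lemma switch_round_gap: "switch_slot s < switch_slot t \<Longrightarrow> switch_round s + 2 \<le> switch_round t"
  unfolding switch_round_def by simp

lemma rank_steady: "i \<noteq> switch_round s \<Longrightarrow> i \<noteq> Suc (switch_round s) \<Longrightarrow> rank s i a = m + s"
  unfolding rank_def by auto

lemma visits_early: "i \<le> switch_round s \<Longrightarrow> visits s i (early_anchor s)"
  unfolding visits_def by simp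

lemma visits_late: "Suc (switch_round s) \<le> i \<Longrightarrow> i < 2 * m \<Longrightarrow> visits s i (late_anchor s)"
  unfolding visits_def late_start_def by auto

lemma visits_before_switch:
  "switch_round s + 2 \<le> switch_round t \<Longrightarrow> i \<le> Suc (switch_round s) \<Longrightarrow> visits t i a \<Longrightarrow>
    a = early_anchor t"
  unfolding visits_def late_start_def by (auto split: if_splits)

lemma visits_after_switch:
  "switch_round s + 2 \<le> switch_round t \<Longrightarrow> switch_round t \<le> i \<Longrightarrow> visits s i a \<Longrightarrow>
    a = late_anchor s"
  unfolding visits_def late_start_def by (auto split: if_splits)

lemma no_visit_within_wrapping_switch:
  assumes u: "u < m" and wrapping: "\<not> u + d < m"
    and p: "early_anchor u \<le> p" "p \<le> late_anchor u" and q: "u < q" "q < 2 * m + u"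
    and e: "e \<in> events" "(switch_round u, p, q) < e" "e < (Suc (switch_round u), p, q)"
  shows "label e \<noteq> m + u"
proof
  assume "label e = m + u"
  with e(1) obtain j a where v: "visits u j a" and e': "e = (j, a, rank u j a)"
    using visit_events[OF u] by blast
  have "j = switch_round u \<or> j = Suc (switch_round u)"
    using e(2,3) unfolding e' by auto
  then show False
  proof
    assume j: "j = switch_round u"
    then have "a = u + d - m" "rank u j a = u"
      using v rank_wrapping_switch[OF u wrapping] unfolding visits_wrapping_iff[OF wrapping] by auto
    then show False
      using e(2) p q wrapping unfolding e' j early_anchor_def by auto
  next
    assume j: "j = Suc (switch_round u)"
    then have "a = u" "rank u j a = 2 * m + u"
      using v rank_wrapping_switch[OF u wrapping] unfolding visits_wrapping_iff[OF wrapping] by auto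
    then show False
      using e(3) p q wrapping unfolding e' j late_anchor_def by auto
  qed
qed

lemma not_separated_at_earlier_switch_short:
  assumes s: "s < m" and t: "t < m" and slots: "switch_slot s < switch_slot t"
    and misses: "switch_misses s (early_anchor t)" and short: "s + d < m"
  shows "\<not> separated_on events label (m + s) (m + t)"
proof -
  have gap: "switch_round s + 2 \<le> switch_round t"
    using switch_round_gap[OF slots] .
  have "m + s \<noteq> m + t"
    using slots by auto
  let ?r = "switch_round s"
  have "visits s ?r s" "visits s ?r (s + d)"
    using switch_round_less[OF s] unfolding visits_short_iff[OF short] by auto
  then have ev: "(?r, s, 2 * m + s) \<in> events" "(?r, s + d, s) \<in> events"
    using visit_event[OF s] rank_short_switch[OF s short] by metis+
  have between: "label e \<noteq> m + t"
    if "e \<in> events" "(?r, s, 2 * m + s) < e" "e < (?r, s + d, s)" for e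
  proof
    assume "label e = m + t"
    with that(1) obtain j a where v: "visits t j a" and e: "e = (j, a, rank t j a)"
      using visit_events[OF t] by blast
    have "j = ?r"
      using that(2,3) unfolding e by auto
    then have "rank t j a = m + t" "a = early_anchor t"
      using rank_steady gap visits_before_switch[OF gap _ v] by auto
    then have "s < early_anchor t" "early_anchor t < s + d"
      using that(2,3) s t unfolding e \<open>j = ?r\<close> by auto
    then show False
      using misses short unfolding switch_misses_def early_anchor_def late_anchor_def by auto
  qed
  have labels: "label (?r, s, 2 * m + s) = m + s" "label (?r, s + d, s) = m + s"
    using s by simp_all
  have "(?r, s, 2 * m + s) < (?r, s + d, s)"
    using two_le_d by simp
  from not_separated_onI[OF ev this labels \<open>m + s \<noteq> m + t\<close> between]
  show ?thesis .
qed

lemma not_separated_at_earlier_switch_wrapping: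
  assumes s: "s < m" and t: "t < m" and slots: "switch_slot s < switch_slot t"
    and misses: "switch_misses s (early_anchor t)" and wrapping: "\<not> s + d < m"
  shows "\<not> separated_on events label (m + s) (m + t)"
proof -
  have gap: "switch_round s + 2 \<le> switch_round t"
    using switch_round_gap[OF slots] .
  have "m + s \<noteq> m + t"
    using slots by auto
  let ?r = "switch_round s" and ?p = "early_anchor t"
  have "visits t ?r ?p" "visits t (Suc ?r) ?p"
    using gap by (auto intro: visits_early)
  moreover have "rank t ?r ?p = m + t" "rank t (Suc ?r) ?p = m + t"
    using gap by (auto intro: rank_steady)
  ultimately have ev: "(?r, ?p, m + t) \<in> events" "(Suc ?r, ?p, m + t) \<in> events"
    using visit_event[OF t] by metis+
  have "early_anchor s \<le> ?p" "?p \<le> late_anchor s"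
    using misses wrapping unfolding switch_misses_def by auto
  then have between: "label e \<noteq> m + s"
    if "e \<in> events" "(?r, ?p, m + t) < e" "e < (Suc ?r, ?p, m + t)" for e
    using no_visit_within_wrapping_switch[OF s wrapping _ _ _ _ that] s t by simp
  have labels: "label (?r, ?p, m + t) = m + t" "label (Suc ?r, ?p, m + t) = m + t"
    using t by simp_all
  have "(?r, ?p, m + t) < (Suc ?r, ?p, m + t)"
    by simp
  from not_separated_onI[OF ev this labels \<open>m + s \<noteq> m + t\<close>[symmetric] between]
  show ?thesis
    by (subst separated_on_commute)
qed

lemma not_separated_at_later_switch_short:
  assumes s: "s < m" and t: "t < m" and slots: "switch_slot s < switch_slot t"
    and misses: "switch_misses t (late_anchor s)" and short: "t + d < m"
  shows "\<not> separated_on events label (m + s) (m + t)"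
proof -
  have gap: "switch_round s + 2 \<le> switch_round t"
    using switch_round_gap[OF slots] .
  have "m + s \<noteq> m + t"
    using slots by auto
  let ?r = "switch_round t"
  have "visits t ?r t" "visits t ?r (t + d)"
    using switch_round_less[OF t] unfolding visits_short_iff[OF short] by auto
  then have ev: "(?r, t, 2 * m + t) \<in> events" "(?r, t + d, t) \<in> events"
    using visit_event[OF t] rank_short_switch[OF t short] by metis+
  have between: "label e \<noteq> m + s"
    if "e \<in> events" "(?r, t, 2 * m + t) < e" "e < (?r, t + d, t)" for e
  proof
    assume "label e = m + s"
    with that(1) obtain j a where v: "visits s j a" and e: "e = (j, a, rank s j a)"
      using visit_events[OF s] by blast
    have "j = ?r"
      using that(2,3) unfolding e by auto
    then have "rank s j a = m + s" "a = late_anchor s"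
      using rank_steady gap visits_after_switch[OF gap _ v] by auto
    then have "t < late_anchor s" "late_anchor s < t + d"
      using that(2,3) s t unfolding e \<open>j = ?r\<close> by auto
    then show False
      using misses short unfolding switch_misses_def early_anchor_def late_anchor_def by auto
  qed
  have labels: "label (?r, t, 2 * m + t) = m + t" "label (?r, t + d, t) = m + t"
    using t by simp_all
  have "(?r, t, 2 * m + t) < (?r, t + d, t)"
    using two_le_d by simp
  from not_separated_onI[OF ev this labels \<open>m + s \<noteq> m + t\<close>[symmetric] between]
  show ?thesis
    by (subst separated_on_commute)
qed

lemma not_separated_at_later_switch_wrapping:
  assumes s: "s < m" and t: "t < m" and slots: "switch_slot s < switch_slot t"
    and misses: "switch_misses t (late_anchor s)" and wrapping: "\<not> t + d < m"
  shows "\<not> separated_on events label (m + s) (m + t)"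
proof -
  have gap: "switch_round s + 2 \<le> switch_round t"
    using switch_round_gap[OF slots] .
  have "m + s \<noteq> m + t"
    using slots by auto
  let ?r = "switch_round t" and ?p = "late_anchor s"
  have "visits s ?r ?p" "visits s (Suc ?r) ?p"
    using gap switch_round_less[OF t] by (auto intro: visits_late)
  moreover have "rank s ?r ?p = m + s" "rank s (Suc ?r) ?p = m + s"
    using gap by (auto intro: rank_steady)
  ultimately have ev: "(?r, ?p, m + s) \<in> events" "(Suc ?r, ?p, m + s) \<in> events"
    using visit_event[OF s] by metis+
  have "early_anchor t \<le> ?p" "?p \<le> late_anchor t"
    using misses wrapping unfolding switch_misses_def by auto
  then have between: "label e \<noteq> m + t"
    if "e \<in> events" "(?r, ?p, m + s) < e" "e < (Suc ?r, ?p, m + s)" for e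
    using no_visit_within_wrapping_switch[OF t wrapping _ _ _ _ that] s t by simp
  have labels: "label (?r, ?p, m + s) = m + s" "label (Suc ?r, ?p, m + s) = m + s"
    using s by simp_all
  have "(?r, ?p, m + s) < (Suc ?r, ?p, m + s)"
    by simp
  from not_separated_onI[OF ev this labels \<open>m + s \<noteq> m + t\<close> between]
  show ?thesis .
qed

lemma not_separated_visitors_ordered:
  assumes s: "s < m" and t: "t < m" and slots: "switch_slot s < switch_slot t"
  shows "\<not> separated_on events label (m + s) (m + t)"
  using switch_misses_either[OF s t slots]
proof
  assume "switch_misses s (early_anchor t)"
  then show ?thesis
    using not_separated_at_earlier_switch_short[OF s t slots]
      not_separated_at_earlier_switch_wrapping[OF s t slots] by blast
next
  assume "switch_misses t (late_anchor s)"
  then show ?thesis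
    using not_separated_at_later_switch_short[OF s t slots]
      not_separated_at_later_switch_wrapping[OF s t slots] by blast
qed

lemma not_separated_visitors:
  assumes s: "s < m" and t: "t < m" and "s \<noteq> t"
  shows "\<not> separated_on events label (m + s) (m + t)"
proof -
  have "switch_slot s \<noteq> switch_slot t"
    using switch_slot_inj s t \<open>s \<noteq> t\<close> by blast
  then consider "switch_slot s < switch_slot t" | "switch_slot t < switch_slot s"
    by linarith
  then show ?thesis
    using not_separated_visitors_ordered[OF s t] not_separated_visitors_ordered[OF t s]
      separated_on_commute by metis
qed


definition arc_adj :: "nat \<Rightarrow> nat \<Rightarrow> bool" where
  "arc_adj x y \<longleftrightarrow> x < 2 * m \<and> y < 2 * m \<and> x \<noteq> y \<and>
     (x < m \<and> y < m \<or> x < m \<and> m \<le> y \<and> in_arc (y - m) x \<or> y < m \<and> m \<le> x \<and> in_arc (x - m) y)"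

definition word :: "nat list" where
  "word = map label (sorted_list_of_set events)"

lemma separated_on_events_iff_adj:
  assumes "x < 2 * m" "y < 2 * m" "x \<noteq> y" "x < m"
  shows "separated_on events label x y \<longleftrightarrow> arc_adj x y"
proof (cases "y < m")
  case True
  then show ?thesis
    using separated_clique assms unfolding arc_adj_def by auto
next
  case False
  define s where "s = y - m"
  have y: "y = m + s" "s < m"
    using False assms(2) unfolding s_def by auto
  show ?thesis
  proof (cases "in_arc s x")
    case True
    then show ?thesis
      using separated_in_arc[OF y(2) assms(4)] assms y unfolding arc_adj_def by auto
  next
    case False
    then show ?thesis
      using not_separated_off_arc[OF y(2) assms(4)] assms y unfolding arc_adj_def by auto
  qed
qed

lemma alternate_word_iff_adj:
  assumes "x < 2 * m" "y < 2 * m" "x \<noteq> y"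
  shows "alternate word x y \<longleftrightarrow> arc_adj x y"
proof -
  have "alternate word x y \<longleftrightarrow> separated_on events label x y"
    unfolding word_def using alternate_iff_separated[OF assms(3)]
      separated_map_sorted_list_of_set[OF finite_events] by simp
  also have "\<dots> \<longleftrightarrow> arc_adj x y"
  proof (cases "x < m \<or> y < m")
    case True
    have "arc_adj x y \<longleftrightarrow> arc_adj y x"
      unfolding arc_adj_def by auto
    then show ?thesis
      using True separated_on_events_iff_adj assms separated_on_commute by metis
  next
    case False
    then obtain s t where "x = m + s" "y = m + t" "s < m" "t < m" "s \<noteq> t"
      using assms by (metis add_diff_inverse_nat add_less_cancel_left mult_2)
    then show ?thesis
      using not_separated_visitors unfolding arc_adj_def by auto
  qed
  finally show ?thesis .
qed

lemma set_word: "set word = {..<2 * m}"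
proof -
  have "label ` events = {..<2 * m}"
  proof
    show "label ` events \<subseteq> {..<2 * m}"
      using label_less by auto
    show "{..<2 * m} \<subseteq> label ` events"
    proof
      fix x assume "x \<in> {..<2 * m}"
      show "x \<in> label ` events"
      proof (cases "x < m")
        case True
        then have "(0, x, 3 * m) \<in> events"
          using clique_event by simp
        then show ?thesis
          using label_clique by (metis image_eqI)
      next
        case False
        then obtain s where s: "x = m + s" "s < m"
          using \<open>x \<in> {..<2 * m}\<close> by (metis add_diff_inverse_nat lessThan_iff add_less_cancel_left mult_2)
        then have "(0, early_anchor s, rank s 0 (early_anchor s)) \<in> events"
          using visit_event visits_early by simp
        then show ?thesis
          using label_visit[OF s(2)] s(1) by (metis image_eqI)
      qed
    qed
  qed
  then show ?thesis
    unfolding word_def using finite_events by simp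
qed

lemma neighbourhood_visitor:
  "v \<in> {m..<2 * m} \<Longrightarrow> neighbourhood {..<2 * m} arc_adj v = {z. z < m \<and> in_arc (v - m) z}"
  unfolding neighbourhood_def arc_adj_def by auto

lemma card_arc: "s < m \<Longrightarrow> card {z. z < m \<and> in_arc s z} = d"
proof (cases "s + d < m")
  case True
  then have "{z. z < m \<and> in_arc s z} = {s..<s + d}"
    unfolding in_arc_def by auto
  then show ?thesis
    by simp
next
  case False
  assume "s < m"
  then have "{z. z < m \<and> in_arc s z} = {..<s + d - m} \<union> {s..<m}"
    using False d_less_m unfolding in_arc_def by auto
  moreover have "{..<s + d - m} \<inter> {s..<m} = {}"
    using d_less_m by auto
  ultimately show ?thesis
    using False \<open>s < m\<close> by (simp add: card_Un_disjoint)
qed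

lemma arcs_differ:
  assumes "s < t" "t < m"
  shows "\<exists>z<m. in_arc s z \<noteq> in_arc t z"
proof (cases "s + d < m")
  case True
  show ?thesis
  proof (cases "t + d < m")
    case True
    then show ?thesis
      using \<open>s + d < m\<close> assms two_le_d unfolding in_arc_def by (intro exI[of _ s]) auto
  next
    case False
    then show ?thesis
      using \<open>s + d < m\<close> assms unfolding in_arc_def by (intro exI[of _ "m - 1"]) auto
  qed
next
  case False
  then show ?thesis
    using assms d_less_m unfolding in_arc_def by (intro exI[of _ "t - 1"]) auto
qed

lemma split_graph_arc: "split_graph {..<2 * m} arc_adj {m..<2 * m} {..<m}"
  unfolding split_graph_def
proof (intro conjI)
  show "simple_graph {..<2 * m} arc_adj"
    unfolding simple_graph_def arc_adj_def by auto
  show "independent_set arc_adj {m..<2 * m}"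
    unfolding independent_set_def arc_adj_def by auto
  show "maximal_clique {..<2 * m} arc_adj {..<m}"
    unfolding maximal_clique_def
  proof (intro conjI ballI)
    show "is_clique arc_adj {..<m}"
      unfolding is_clique_def arc_adj_def by auto
    fix v assume v: "v \<in> {..<2 * m} - {..<m}"
    define z where "z = (if v - m + d < m then v - m + d else v - m + d - m)"
    have "z < m" "\<not> in_arc (v - m) z"
      using v d_less_m unfolding z_def in_arc_def by auto
    then have "\<not> arc_adj v z" "v \<noteq> z"
      using v unfolding arc_adj_def by auto
    then show "\<not> is_clique arc_adj (insert v {..<m})"
      using \<open>z < m\<close> unfolding is_clique_def by blast
  qed auto
qed auto

lemma word_representable_arc: "word_representable {..<2 * m} arc_adj"
  unfolding word_representable_def using set_word alternate_word_iff_adj by auto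

lemma degree_visitor: "v \<in> {m..<2 * m} \<Longrightarrow> degree {..<2 * m} arc_adj v = d"
  using neighbourhood_visitor card_arc[of "v - m"] unfolding degree_def by auto

lemma inj_on_neighbourhood_visitors: "inj_on (neighbourhood {..<2 * m} arc_adj) {m..<2 * m}"
proof
  fix x y assume xy: "x \<in> {m..<2 * m}" "y \<in> {m..<2 * m}"
    and eq: "neighbourhood {..<2 * m} arc_adj x = neighbourhood {..<2 * m} arc_adj y"
  have "{z. z < m \<and> in_arc (x - m) z} = {z. z < m \<and> in_arc (y - m) z}"
    using eq neighbourhood_visitor[OF xy(1)] neighbourhood_visitor[OF xy(2)] by simp
  then have "\<forall>z<m. in_arc (x - m) z = in_arc (y - m) z"
    by blast
  then have "x - m = y - m"
    using arcs_differ[of "x - m" "y - m"] arcs_differ[of "y - m" "x - m"] xy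
    by (metis atLeastLessThan_iff less_diff_conv2 linorder_neqE_nat mult_2)
  then show "x = y"
    using xy by auto
qed

lemma ex_split_graph_with_visitors:
  "\<exists>(V :: nat set) Adj I K S.
     split_graph V Adj I K \<and> word_representable V Adj \<and> card K = m \<and>
     S \<subseteq> I \<and> card S = m \<and> (\<forall>v\<in>S. degree V Adj v = d) \<and>
     inj_on (neighbourhood V Adj) S"
  using split_graph_arc word_representable_arc degree_visitor inj_on_neighbourhood_visitors
  by (intro exI[of _ "{..<2 * m}"] exI[of _ arc_adj] exI[of _ "{m..<2 * m}"] exI[of _ "{..<m}"]
      exI[of _ "{m..<2 * m}"]) auto

end

theorem theorem12:
  shows "(\<forall>(V :: 'a set) Adj I K d S.
            split_graph V Adj I K \<and> word_representable V Adj \<and> card K \<ge> 3 \<and>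
            2 \<le> d \<and> 2 * d \<le> card K + 1 \<and>
            S \<subseteq> I \<and> (\<forall>v\<in>S. degree V Adj v = d) \<and>
            inj_on (neighbourhood V Adj) S
            \<longrightarrow> card S \<le> card K)
       \<and> (\<forall>m d :: nat. m \<ge> 3 \<and> 2 \<le> d \<and> 2 * d \<le> m + 1 \<longrightarrow>
            (\<exists>(V :: nat set) Adj I K S.
               split_graph V Adj I K \<and> word_representable V Adj \<and> card K = m \<and>
               S \<subseteq> I \<and> card S = m \<and> (\<forall>v\<in>S. degree V Adj v = d) \<and>
               inj_on (neighbourhood V Adj) S))"
proof (intro conjI allI impI; elim conjE)
  show "card S \<le> card K"
    if "split_graph V Adj I K" "word_representable V Adj" "2 \<le> d" "S \<subseteq> I"
      "\<forall>v\<in>S. degree V Adj v = d" "inj_on (neighbourhood V Adj) S"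
    for V :: "'a set" and Adj I K d S
    using that(3) by (intro card_le_card_clique_if_equal_degree[OF that(1,2,4,5) _ that(6)]) simp
  show "\<exists>(V :: nat set) Adj I K S.
          split_graph V Adj I K \<and> word_representable V Adj \<and> card K = m \<and>
          S \<subseteq> I \<and> card S = m \<and> (\<forall>v\<in>S. degree V Adj v = d) \<and>
          inj_on (neighbourhood V Adj) S"
    if "3 \<le> m" "2 \<le> d" "2 * d \<le> m + 1" for m d :: nat
    using arc_construction.ex_split_graph_with_visitors arc_construction.intro that by blast
qed

end
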